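(* Let $k\ge 3$ and $A\in\mathcal{M}_d$. Then $$\operatorname{tr}_1\big[(1\,2\cdots k)^{T_k}(A\otimes\mathbb{1}^{\otimes(k-1)})\big]=\Big(\cdots\big((A\otimes\mathbb{1}^{\otimes(k-2)})^{R_{k-1,k-2}}\big)^{R_{k-1,k-3}}\cdots\Big)^{R_{k-1,1}},$$ i.e. the reshufflings $R_{k-1,k-2},R_{k-1,k-3},\dots,R_{k-1,1}$ are applied successively, in this order, to $A\otimes\mathbb{1}^{\otimes(k-2)}\in\mathcal{M}_d^{\otimes(k-1)}$.
   Context: $\mathcal{M}_d$ denotes complex $d\times d$ matrices; $\{|i\rangle\}$ is a fixed orthonormal basis of $\mathbb{C}^d$. A permutation $\sigma\in S_k$ acts on $(\mathbb{C}^d)^{\otimes k}$ by $\sigma|v_1\rangle\otimes\cdots\otimes|v_k\rangle=|v_{\sigma^{-1}(1)}\rangle\otimes\cdots\otimes|v_{\sigma^{-1}(k)}\rangle$; $(1\,2\cdots k)$ is the cycle $1\to2\to\cdots\to k\to1$. $T_k$ is the partial transpose on the $k$-th factor in the basis $\{|i\rangle\}$; $\operatorname{tr}_1$ is the partial trace over the first factor. Reshuffling of sites $a,b$ on $\mathcal{M}_d^{\otimes n}$: $R_{a,b}$ is the linear map defined on basis elements by sending $|i_1\dots i_n\rangle\langle j_1\dots j_n|$ to the operator obtained by exchanging the $a$-th ket index $i_a$ with the $b$-th bra index $j_b$, i.e. the new $a$-th ket index is $j_b$ and the new $b$-th bra index is $i_a$, all other indices unchanged. *)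

theory Defs
  imports Complex_Main
begin

text \<open>An operator on (C^d)^{\<otimes>n} is represented by its matrix entries
  X i j = <i_1...i_n| X |j_1...j_n>, where the multi-indices are lists of
  length n with entries < d (list position m-1 holds the index of site m).\<close>

type_synonym op = "nat list \<Rightarrow> nat list \<Rightarrow> complex"

definition idx :: "nat \<Rightarrow> nat \<Rightarrow> nat list set" where
  "idx d n = {l. length l = n \<and> (\<forall>x\<in>set l. x < d)}"

definition op_mult :: "nat \<Rightarrow> nat \<Rightarrow> op \<Rightarrow> op \<Rightarrow> op" where
  "op_mult d n X Y = (\<lambda>i j. \<Sum>l\<in>idx d n. X i l * Y l j)"

text \<open>Permutation operator of sigma (on sites 1..k):
  sigma |v_1..v_k> = |v_{sigma^-1(1)} .. v_{sigma^-1(k)}>, i.e.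
  <i|sigma|j> = 1 iff i_{sigma(m)} = j_m for all m.\<close>
definition perm_op :: "nat \<Rightarrow> (nat \<Rightarrow> nat) \<Rightarrow> op" where
  "perm_op k \<sigma> = (\<lambda>i j. if \<forall>m\<in>{1..k}. i ! (\<sigma> m - 1) = j ! (m - 1) then 1 else 0)"

definition cycle :: "nat \<Rightarrow> nat \<Rightarrow> nat" where
  "cycle k m = (if m = k then 1 else m + 1)"

definition ptrans :: "nat \<Rightarrow> op \<Rightarrow> op" where
  "ptrans s X = (\<lambda>i j. X (i[s - 1 := j ! (s - 1)]) (j[s - 1 := i ! (s - 1)]))"

definition ptrace1 :: "nat \<Rightarrow> op \<Rightarrow> op" where
  "ptrace1 d X = (\<lambda>i j. \<Sum>a<d. X (a # i) (a # j))"

definition tensor_id :: "(nat \<Rightarrow> nat \<Rightarrow> complex) \<Rightarrow> op" where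
  "tensor_id A = (\<lambda>i j. A (hd i) (hd j) * (if tl i = tl j then 1 else 0))"

text \<open>Reshuffling R_{a,b}: |i><j| is sent to the operator whose a-th ket index is j_b
  and whose b-th bra index is i_a. On matrix entries this reads as follows.\<close>
definition reshuffle :: "nat \<Rightarrow> nat \<Rightarrow> op \<Rightarrow> op" where
  "reshuffle a b X = (\<lambda>i j. X (i[a - 1 := j ! (b - 1)]) (j[b - 1 := i ! (a - 1)]))"

end

theory Submission imports Defs begin

text \<open>With n = k - 1, split the multi-indices as i = s # u @ [e] and j = w @ [p, q]. Both
  sides equal A s e if w = u and p = q, and vanish otherwise. On the left, the partial transpose
  of the cyclic shift is the kernel of_bool (y = rotate1 x) with the last entries of x and y
  exchanged, so the partial trace against A \<otimes> 1 picks out a single entry of A. On the right,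
  the chain R_{n,n-1}, ..., R_{n,1} moves j_{n-1} into ket site n and pushes i_n to the front of
  the bra index, so it only permutes the arguments at which A \<otimes> 1 is evaluated.\<close>

lemma Cons_snoc_cases:
  assumes "2 \<le> length xs"
  obtains s u e where "xs = s # u @ [e]"
proof -
  obtain s r where r: "xs = s # r"
    using assms by (cases xs) auto
  moreover obtain u e where "r = u @ [e]"
    using assms r by (cases r rule: rev_cases) auto
  ultimately show thesis
    using that by simp
qed

lemma snoc_snoc_cases:
  assumes "2 \<le> length xs"
  obtains w p q where "xs = w @ [p, q]"
proof -
  obtain r q where r: "xs = r @ [q]"
    using assms by (cases xs rule: rev_cases) auto
  moreover obtain w p where "r = w @ [p]"
    using assms r by (cases r rule: rev_cases) auto
  ultimately show thesis
    using that by simp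
qed

lemma sum_of_bool_eq_conj_mult:
  assumes "finite S" "s \<in> S"
  shows "(\<Sum>c\<in>S. of_bool (c = s \<and> P) * f c) = of_bool P * (f s :: 'a::semiring_1)"
  using assms by (cases P) simp_all

lemma finite_idx: "finite (idx d n)"
proof -
  have "idx d n = {xs. set xs \<subseteq> {..<d} \<and> length xs = n}"
    by (auto simp: idx_def)
  then show ?thesis
    using finite_lists_length_eq[of "{..<d}" n] by simp
qed

lemma idx_Suc: "idx d (Suc n) = (\<lambda>(c, l). c # l) ` ({..<d} \<times> idx d n)"
  by (auto simp: idx_def length_Suc_conv image_iff)

lemma sum_idx_Suc:
  "(\<Sum>l\<in>idx d (Suc n). f l) = (\<Sum>c<d. \<Sum>l\<in>idx d n. f (c # l))"
  by (simp add: idx_Suc sum.reindex inj_on_def sum.cartesian_product finite_idx split_def)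

lemma ptrace1_mult_tensor_id:
  assumes "j \<in> idx d n"
  shows "ptrace1 d (op_mult d (Suc n) P (tensor_id A)) i j
    = (\<Sum>a<d. \<Sum>c<d. P (a # i) (c # j) * A c a)"
  using assms
  by (simp add: ptrace1_def op_mult_def tensor_id_def sum_idx_Suc finite_idx
      if_distrib sum.delta cong: if_cong)

lemma perm_op_cycle:
  assumes "length x = k" "length y = k"
  shows "perm_op k (cycle k) x y = of_bool (y = rotate1 x)"
proof -
  have "(\<forall>m\<in>Suc ` {..<k}. x ! (cycle k m - 1) = y ! (m - 1)) \<longleftrightarrow> (\<forall>t<k. y ! t = rotate1 x ! t)"
    using assms by (auto simp: cycle_def nth_rotate1 mod_if)
  then show ?thesis
    using assms by (simp add: perm_op_def list_eq_iff_nth_eq image_Suc_lessThan)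
qed

lemma ptrans_snoc:
  assumes "length y = length x"
  shows "ptrans (Suc (length x)) X (x @ [a]) (y @ [b]) = X (x @ [b]) (y @ [a])"
  using assms by (simp add: ptrans_def list_update_append nth_append)

lemma ptrans_perm_op_cycle:
  assumes "k = length u + 3" "length w = length u"
  shows "ptrans k (perm_op k (cycle k)) (a # s # u @ [e]) (c # w @ [p, q])
    = of_bool (c = s \<and> a = e \<and> u = w \<and> p = q)"
proof -
  have k: "k = Suc (length (a # s # u))"
    using assms by simp
  have "ptrans k (perm_op k (cycle k)) ((a # s # u) @ [e]) ((c # w @ [p]) @ [q])
    = perm_op k (cycle k) ((a # s # u) @ [q]) ((c # w @ [p]) @ [e])"
    unfolding k by (rule ptrans_snoc) (use assms in simp)
  also have "\<dots> = of_bool (c # w @ [p, e] = rotate1 (a # s # u @ [q]))"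
    using assms by (simp add: perm_op_cycle)
  also have "\<dots> = of_bool (c = s \<and> a = e \<and> u = w \<and> p = q)"
    using assms by auto
  finally show ?thesis by simp
qed

lemma ptrace1_ptrans_cycle_tensor_id:
  assumes "k = length u + 3" "length w = length u" "s < d" "e < d" "w @ [p, q] \<in> idx d (k - 1)"
  shows "ptrace1 d (op_mult d k (ptrans k (perm_op k (cycle k))) (tensor_id A))
      (s # u @ [e]) (w @ [p, q])
    = of_bool (u = w \<and> p = q) * A s e"
proof -
  have k: "k = Suc (k - 1)"
    using assms(1) by simp
  have "ptrace1 d (op_mult d k (ptrans k (perm_op k (cycle k))) (tensor_id A))
      (s # u @ [e]) (w @ [p, q])
    = (\<Sum>a<d. \<Sum>c<d. ptrans k (perm_op k (cycle k)) (a # s # u @ [e]) (c # w @ [p, q]) * A c a)"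
    by (rule ptrace1_mult_tensor_id[OF assms(5), folded k])
  also have "\<dots> = (\<Sum>a<d. \<Sum>c<d. of_bool (c = s \<and> a = e \<and> u = w \<and> p = q) * A c a)"
    by (simp only: ptrans_perm_op_cycle[OF assms(1,2)])
  also have "\<dots> = of_bool (u = w \<and> p = q) * A s e"
    using assms(3,4) by (simp only: sum_of_bool_eq_conj_mult[OF finite_lessThan] lessThan_iff)
  finally show ?thesis .
qed

lemma foldl_reshuffle_descending:
  assumes "0 < n" "n \<le> length i"
  shows "foldl (\<lambda>X b. reshuffle n b X) X (rev [1..<length w + 2]) i (w @ x # v)
    = X (i[n - 1 := x]) (i ! (n - 1) # w @ v)"
proof (induction w arbitrary: X x v rule: rev_induct)
  case Nil
  then show ?case by (simp add: reshuffle_def)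
next
  case (snoc c w)
  have "foldl (\<lambda>X b. reshuffle n b X) X (rev [1..<length (w @ [c]) + 2]) i ((w @ [c]) @ x # v)
      = reshuffle n (length w + 2) X (i[n - 1 := c]) (i ! (n - 1) # w @ x # v)"
    using snoc.IH by simp
  also have "\<dots> = X (i[n - 1 := x]) (i ! (n - 1) # (w @ [c]) @ v)"
    using assms by (simp add: reshuffle_def nth_append list_update_append)
  finally show ?case .
qed

lemma foldl_reshuffle_tensor_id:
  assumes "length w = length u"
  shows "foldl (\<lambda>X b. reshuffle (length u + 2) b X) (tensor_id A) (rev [1..<length w + 2])
      (s # u @ [e]) (w @ [p, q])
    = of_bool (u = w \<and> p = q) * A s e"
proof -
  have "foldl (\<lambda>X b. reshuffle (length u + 2) b X) (tensor_id A) (rev [1..<length w + 2])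
      (s # u @ [e]) (w @ [p, q])
    = tensor_id A ((s # u @ [e])[length u + 2 - 1 := p]) ((s # u @ [e]) ! (length u + 2 - 1) # w @ [q])"
    by (rule foldl_reshuffle_descending) simp_all
  also have "\<dots> = of_bool (u = w \<and> p = q) * A s e"
    using assms by (simp add: tensor_id_def list_update_append)
  finally show ?thesis .
qed

theorem proposition5:
  fixes d k :: nat and A :: "nat \<Rightarrow> nat \<Rightarrow> complex"
  assumes "k \<ge> 3"
  shows "\<forall>i\<in>idx d (k - 1). \<forall>j\<in>idx d (k - 1).
    ptrace1 d (op_mult d k (ptrans k (perm_op k (cycle k))) (tensor_id A)) i j
    = foldl (\<lambda>X b. reshuffle (k - 1) b X) (tensor_id A) (rev [1..<k - 1]) i j"
proof (intro ballI)
  fix i j assume i: "i \<in> idx d (k - 1)" and j: "j \<in> idx d (k - 1)"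
  then have len: "length i = k - 1" "length j = k - 1"
    by (simp_all add: idx_def)
  then have "2 \<le> length i" "2 \<le> length j"
    using assms by simp_all
  obtain s u e where i_eq: "i = s # u @ [e]"
    using \<open>2 \<le> length i\<close> by (rule Cons_snoc_cases)
  obtain w p q where j_eq: "j = w @ [p, q]"
    using \<open>2 \<le> length j\<close> by (rule snoc_snoc_cases)
  have k: "k = length u + 3" "length w = length u"
    using len assms by (simp_all add: i_eq j_eq)
  have "s < d" "e < d"
    using i by (simp_all add: idx_def i_eq)
  have k_minus_1: "k - 1 = length u + 2" "k - 1 = length w + 2"
    using k by simp_all
  have "ptrace1 d (op_mult d k (ptrans k (perm_op k (cycle k))) (tensor_id A)) i j
      = of_bool (u = w \<and> p = q) * A s e"
    unfolding i_eq j_eq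
    by (rule ptrace1_ptrans_cycle_tensor_id[OF k \<open>s < d\<close> \<open>e < d\<close> j[unfolded j_eq]])
  also have "\<dots> = foldl (\<lambda>X b. reshuffle (k - 1) b X) (tensor_id A) (rev [1..<k - 1]) i j"
    unfolding i_eq j_eq by (rule foldl_reshuffle_tensor_id[OF k(2), folded k_minus_1, symmetric])
  finally show "ptrace1 d (op_mult d k (ptrans k (perm_op k (cycle k))) (tensor_id A)) i j
    = foldl (\<lambda>X b. reshuffle (k - 1) b X) (tensor_id A) (rev [1..<k - 1]) i j" .
qed

end
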